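(* Let $X,Y$ be compact topological spaces, $\mu\in\mathcal{P}(X)$, $\nu\in\mathcal{P}(Y)$, $c\in C(X\times Y)$. For $u\in C(X)$ the following are equivalent: (i) $u$ is a critical point of the functional $\mathcal{F}$ on $C(X)$; (ii) $\rho_u=1$ almost everywhere with respect to $\mu$. Moreover, if $u$ is a critical point of $\mathcal{F}$, then $u_*:=S(u)$ is a fixed point of $S$ on $C(X)$.
   Context: For $u\in C(X)$ set $v[u](y)=\log\int_Xe^{-c(x,y)-u(x)}d\mu(x)$, and for $v\in C(Y)$ set $u[v](x)=\log\int_Ye^{-c(x,y)-v(y)}d\nu(y)$. Define $S:C(X)\to C(X)$ by $S(u)=u[v[u]]$ and $\rho_u:=e^{S(u)-u}$ (so $\rho_u\mu$ is a probability measure). Define $\mathcal{F}(u)=\int_Xu\,d\mu+\int_Yv[u]\,d\nu$. A critical point means $\frac{d}{dt}\mathcal{F}(u+t\dot u)|_{t=0}=0$ for every $\dot u\in C(X)$. *)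

theory Defs
  imports "HOL-Probability.Probability"
begin

definition vdual :: "'a measure \<Rightarrow> ('a \<times> 'b \<Rightarrow> real) \<Rightarrow> ('a \<Rightarrow> real) \<Rightarrow> 'b \<Rightarrow> real" where
  "vdual \<mu> c u y = ln (\<integral>x. exp (- c (x, y) - u x) \<partial>\<mu>)"

definition udual :: "'b measure \<Rightarrow> ('a \<times> 'b \<Rightarrow> real) \<Rightarrow> ('b \<Rightarrow> real) \<Rightarrow> 'a \<Rightarrow> real" where
  "udual \<nu> c v x = ln (\<integral>y. exp (- c (x, y) - v y) \<partial>\<nu>)"

definition Sop :: "'a measure \<Rightarrow> 'b measure \<Rightarrow> ('a \<times> 'b \<Rightarrow> real) \<Rightarrow> ('a \<Rightarrow> real) \<Rightarrow> 'a \<Rightarrow> real" where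
  "Sop \<mu> \<nu> c u = udual \<nu> c (vdual \<mu> c u)"

definition rho :: "'a measure \<Rightarrow> 'b measure \<Rightarrow> ('a \<times> 'b \<Rightarrow> real) \<Rightarrow> ('a \<Rightarrow> real) \<Rightarrow> 'a \<Rightarrow> real" where
  "rho \<mu> \<nu> c u x = exp (Sop \<mu> \<nu> c u x - u x)"

definition Ffun :: "'a measure \<Rightarrow> 'b measure \<Rightarrow> ('a \<times> 'b \<Rightarrow> real) \<Rightarrow> ('a \<Rightarrow> real) \<Rightarrow> real" where
  "Ffun \<mu> \<nu> c u = (\<integral>x. u x \<partial>\<mu>) + (\<integral>y. vdual \<mu> c u y \<partial>\<nu>)"

definition critical_point :: "'a::topological_space set \<Rightarrow> 'a measure \<Rightarrow> 'b measure \<Rightarrow> ('a \<times> 'b \<Rightarrow> real) \<Rightarrow> ('a \<Rightarrow> real) \<Rightarrow> bool" where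
  "critical_point X \<mu> \<nu> c u \<longleftrightarrow>
     (\<forall>ud. continuous_on X ud \<longrightarrow>
        ((\<lambda>t. Ffun \<mu> \<nu> c (\<lambda>x. u x + t * ud x)) has_real_derivative 0) (at 0))"

end

(*
  The derivative of F at u in a continuous direction w is the integral of w (1 - rho_u) against mu.
  Differentiating v[u + t w](y) = log (integral of exp (-c(x,y) - u(x) - t w(x)) dmu(x)) at t = 0
  gives minus the average of w against the plan density pi_u(x,y) = exp (-c(x,y) - u(x) - v[u](y)),
  with a remainder O(t^2) uniform in y because all functions are continuous on compact sets.
  Integrating over nu and applying Fubini turns this into the integral of w rho_u against mu,
  since rho_u is the x-marginal density of pi_u. As rho_u is continuous, the direction
  w = 1 - rho_u shows that criticality forces rho_u = 1 mu-a.e., i.e. S(u) = u mu-a.e.;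
  then v[S(u)] = v[u], hence S(S(u)) = S(u).
*)

theory Submission
  imports Defs
begin

section \<open>Continuous functions on compact measure spaces\<close>

lemma space_eq_of_sets_restrict_borel:
  assumes "sets M = sets (restrict_space borel K)"
  shows "space M = K"
  using sets_eq_imp_space_eq[OF assms] by (simp add: space_restrict_space)

lemma borel_measurable_continuous_on_sets_restrict:
  assumes "sets M = sets (restrict_space borel K)" "continuous_on K h"
  shows "h \<in> borel_measurable M"
  using borel_measurable_continuous_on_restrict[OF assms(2)]
    measurable_cong_sets[OF assms(1) refl] by blast

lemma compact_continuous_on_abs_bound:
  fixes h :: "'a::topological_space \<Rightarrow> real"
  assumes "compact K" "continuous_on K h"
  obtains B where "B > 0" "\<And>x. x \<in> K \<Longrightarrow> \<bar>h x\<bar> \<le> B"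
proof -
  have "bounded (h ` K)" by (intro compact_imp_bounded compact_continuous_image assms)
  then show ?thesis using that unfolding bounded_pos by auto
qed

lemma integrable_continuous_on_compact:
  fixes h :: "'a::topological_space \<Rightarrow> real"
  assumes "finite_measure M" "sets M = sets (restrict_space borel K)" "compact K"
    "continuous_on K h"
  shows "integrable M h"
proof -
  obtain B where "\<And>x. x \<in> K \<Longrightarrow> \<bar>h x\<bar> \<le> B"
    using compact_continuous_on_abs_bound[OF assms(3,4)] by blast
  then show ?thesis
    using assms space_eq_of_sets_restrict_borel[OF assms(2)]
    by (intro finite_measure.integrable_const_bound[where B=B] AE_I2
        borel_measurable_continuous_on_sets_restrict) auto
qed

lemma (in prob_space) abs_integral_le_const:
  fixes h :: "'a \<Rightarrow> real"
  assumes "integrable M h" "AE x in M. \<bar>h x\<bar> \<le> B"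
  shows "\<bar>\<integral>x. h x \<partial>M\<bar> \<le> B"
  using order_trans[OF integral_abs_bound integral_le_const[of "\<lambda>x. \<bar>h x\<bar>" B]] assms by simp

lemma integral_exp_continuous_on_pos:
  fixes h :: "'a::topological_space \<Rightarrow> real"
  assumes "prob_space M" "sets M = sets (restrict_space borel K)" "compact K" "continuous_on K h"
  shows "0 < (\<integral>x. exp (h x) \<partial>M)"
proof -
  interpret prob_space M by fact
  obtain B where B: "\<And>x. x \<in> K \<Longrightarrow> \<bar>h x\<bar> \<le> B"
    using compact_continuous_on_abs_bound[OF assms(3,4)] by blast
  have "exp (- B) \<le> (\<integral>x. exp (h x) \<partial>M)"
    using assms B space_eq_of_sets_restrict_borel[OF assms(2)]
    by (intro integral_ge_const AE_I2 integrable_continuous_on_compact[OF finite_measure_axioms]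
        continuous_intros) (fastforce simp: abs_le_iff)+
  then show ?thesis by (rule less_le_trans[OF exp_gt_zero])
qed

lemma continuous_on_parametric_integral:
  fixes f :: "'p::topological_space \<times> 'q::topological_space \<Rightarrow> real"
  assumes "prob_space M" "sets M = sets (restrict_space borel K)" "compact K"
    "continuous_on (U \<times> K) f"
  shows "continuous_on U (\<lambda>p. \<integral>q. f (p, q) \<partial>M)"
  unfolding continuous_on_def
proof (intro ballI)
  interpret prob_space M by fact
  have sp: "space M = K" using space_eq_of_sets_restrict_borel[OF assms(2)] .
  have int: "integrable M (\<lambda>q. f (p, q))" if "p \<in> U" for p
    using that by (intro integrable_continuous_on_compact[OF finite_measure_axioms assms(2,3)]
        continuous_on_compose2[OF assms(4)] continuous_intros) auto
  fix x assume x: "x \<in> U"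
  show "((\<lambda>p. \<integral>q. f (p, q) \<partial>M) \<longlongrightarrow> (\<integral>q. f (x, q) \<partial>M)) (at x within U)"
    unfolding tendsto_iff
  proof (intro allI impI)
    fix e :: real assume "e > 0"
    then have "e / 2 > 0" by simp
    from continuous_on_prod_compactE[OF assms(4,3) x this]
    obtain W where W: "x \<in> W" "open W" "\<forall>y\<in>W \<inter> U. \<forall>t\<in>K. dist (f (y, t)) (f (x, t)) \<le> e / 2"
      by blast
    have "dist (\<integral>q. f (y, q) \<partial>M) (\<integral>q. f (x, q) \<partial>M) \<le> e / 2" if "y \<in> W" "y \<in> U" for y
    proof -
      have "dist (\<integral>q. f (y, q) \<partial>M) (\<integral>q. f (x, q) \<partial>M) = \<bar>\<integral>q. f (y, q) - f (x, q) \<partial>M\<bar>"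
        using int x that by (simp add: dist_real_def)
      also have "\<dots> \<le> e / 2"
        using W(3) that sp int x by (intro abs_integral_le_const AE_I2) (auto simp: dist_real_def)
      finally show ?thesis .
    qed
    then show "\<forall>\<^sub>F y in at x within U. dist (\<integral>q. f (y, q) \<partial>M) (\<integral>q. f (x, q) \<partial>M) < e"
      unfolding eventually_at_topological using W(1,2) \<open>e > 0\<close> by fastforce
  qed
qed

lemma borel_measurable_pair_uniform_approx:
  fixes f :: "'a::topological_space \<times> 'b::topological_space \<Rightarrow> real"
  assumes sM: "sets M = sets (restrict_space borel X)" and sN: "sets N = sets (restrict_space borel Y)"
    and "compact X" "compact Y" "continuous_on (X \<times> Y) f" "e > 0"
  obtains h where "h \<in> borel_measurable (M \<Otimes>\<^sub>M N)"
    "\<And>x y. x \<in> X \<Longrightarrow> y \<in> Y \<Longrightarrow> \<bar>f (x, y) - h (x, y)\<bar> \<le> e"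
proof -
  have cf': "continuous_on (Y \<times> X) (\<lambda>p. f (snd p, fst p))"
    by (intro continuous_on_compose2[OF assms(5)] continuous_intros) auto
  have "\<forall>z\<in>Y. \<exists>V. z \<in> V \<and> open V \<and> (\<forall>y\<in>V \<inter> Y. \<forall>x\<in>X. \<bar>f (x, y) - f (x, z)\<bar> \<le> e)"
  proof
    fix z assume "z \<in> Y"
    from continuous_on_prod_compactE[OF cf' assms(3) this assms(6)] obtain W
      where "z \<in> W" "open W" "\<forall>y\<in>W \<inter> Y. \<forall>x\<in>X. dist (f (x, y)) (f (x, z)) \<le> e"
      by auto
    then show "\<exists>V. z \<in> V \<and> open V \<and> (\<forall>y\<in>V \<inter> Y. \<forall>x\<in>X. \<bar>f (x, y) - f (x, z)\<bar> \<le> e)"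
      by (intro exI[of _ W]) (simp add: dist_real_def)
  qed
  then obtain V where "\<forall>z\<in>Y. z \<in> V z \<and> open (V z) \<and>
      (\<forall>y\<in>V z \<inter> Y. \<forall>x\<in>X. \<bar>f (x, y) - f (x, z)\<bar> \<le> e)"
    by metis
  then have V: "\<And>z. z \<in> Y \<Longrightarrow> z \<in> V z \<and> open (V z)"
    and close: "\<And>z y x. z \<in> Y \<Longrightarrow> y \<in> V z \<inter> Y \<Longrightarrow> x \<in> X \<Longrightarrow> \<bar>f (x, y) - f (x, z)\<bar> \<le> e"
    by blast+
  obtain T where T: "T \<subseteq> Y" "finite T" "Y \<subseteq> (\<Union>z\<in>T. V z)"
    using compactE_image[OF assms(4), of Y V] V by blast
  have sp: "space (M \<Otimes>\<^sub>M N) = X \<times> Y"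
    by (simp add: space_pair_measure space_eq_of_sets_restrict_borel[OF sM]
        space_eq_of_sets_restrict_borel[OF sN])
  \<comment> \<open>h is piecewise of the form f(x, z), on pieces refining the cover V z, z in T\<close>
  have "\<exists>h \<in> borel_measurable (M \<Otimes>\<^sub>M N). \<forall>x\<in>X. \<forall>y\<in>Y \<inter> (\<Union>z\<in>T. V z). \<bar>f (x, y) - h (x, y)\<bar> \<le> e"
    using T(2,1)
  proof (induction T rule: finite_induct)
    case empty
    show ?case by (intro bexI[of _ "\<lambda>p. 0"]) auto
  next
    case (insert z T)
    then obtain h where h: "h \<in> borel_measurable (M \<Otimes>\<^sub>M N)"
      "\<forall>x\<in>X. \<forall>y\<in>Y \<inter> (\<Union>z\<in>T. V z). \<bar>f (x, y) - h (x, y)\<bar> \<le> e" by auto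
    have z: "z \<in> Y" using insert by auto
    have "(\<lambda>x. f (x, z)) \<in> borel_measurable M"
      using z by (intro borel_measurable_continuous_on_sets_restrict[OF sM]
          continuous_on_compose2[OF assms(5)] continuous_intros) auto
    then have fz: "(\<lambda>p. f (fst p, z)) \<in> borel_measurable (M \<Otimes>\<^sub>M N)"
      using measurable_compose[OF measurable_fst] by blast
    have "V z \<inter> Y \<in> sets N" using V[OF z] by (simp add: sN sets_restrict_space Int_commute)
    then have "snd -` (V z \<inter> Y) \<inter> space (M \<Otimes>\<^sub>M N) \<in> sets (M \<Otimes>\<^sub>M N)"
      by (rule measurable_sets[OF measurable_snd])
    moreover have "snd -` (V z \<inter> Y) \<inter> space (M \<Otimes>\<^sub>M N) = {p \<in> space (M \<Otimes>\<^sub>M N). snd p \<in> V z}"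
      using sp by auto
    ultimately have "{p \<in> space (M \<Otimes>\<^sub>M N). snd p \<in> V z} \<in> sets (M \<Otimes>\<^sub>M N)" by simp
    define h' where "h' p = (if snd p \<in> V z then f (fst p, z) else h p)" for p
    have "h' \<in> borel_measurable (M \<Otimes>\<^sub>M N)"
      unfolding h'_def by (rule measurable_If[OF fz h(1)]) fact
    moreover have "\<forall>x\<in>X. \<forall>y\<in>Y \<inter> (\<Union>z\<in>insert z T. V z). \<bar>f (x, y) - h' (x, y)\<bar> \<le> e"
      using h(2) close[OF z] by (auto simp: h'_def)
    ultimately show ?case by blast
  qed
  then show ?thesis using that T(3) by blast
qed

lemma borel_measurable_pair_continuous_on:
  fixes f :: "'a::topological_space \<times> 'b::topological_space \<Rightarrow> real"
  assumes "sets M = sets (restrict_space borel X)" "sets N = sets (restrict_space borel Y)"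
    and "compact X" "compact Y" "continuous_on (X \<times> Y) f"
  shows "f \<in> borel_measurable (M \<Otimes>\<^sub>M N)"
proof -
  have "\<exists>h. h \<in> borel_measurable (M \<Otimes>\<^sub>M N) \<and>
      (\<forall>x\<in>X. \<forall>y\<in>Y. \<bar>f (x, y) - h (x, y)\<bar> \<le> 1 / Suc n)" for n
    by (rule borel_measurable_pair_uniform_approx[OF assms]) auto
  then obtain H where H: "\<And>n. H n \<in> borel_measurable (M \<Otimes>\<^sub>M N)"
    "\<And>n x y. x \<in> X \<Longrightarrow> y \<in> Y \<Longrightarrow> \<bar>f (x, y) - H n (x, y)\<bar> \<le> 1 / Suc n"
    by metis
  have sp: "space (M \<Otimes>\<^sub>M N) = X \<times> Y"
    by (simp add: space_pair_measure space_eq_of_sets_restrict_borel[OF assms(1)]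
        space_eq_of_sets_restrict_borel[OF assms(2)])
  show ?thesis
  proof (rule borel_measurable_LIMSEQ_real[OF _ H(1)])
    fix p assume "p \<in> space (M \<Otimes>\<^sub>M N)"
    then obtain x y where p: "p = (x, y)" "x \<in> X" "y \<in> Y" using sp by auto
    have "(\<lambda>n. H n p - f p) \<longlonglongrightarrow> 0"
      using H(2)[OF p(2,3)] p(1)
      by (intro Lim_null_comparison[OF _ LIMSEQ_Suc[OF lim_const_over_n[of 1]]])
        (auto simp: abs_minus_commute)
    then show "(\<lambda>n. H n p) \<longlonglongrightarrow> f p" by (simp add: Lim_null[symmetric])
  qed
qed

lemma integrable_pair_continuous_on:
  fixes f :: "'a::topological_space \<times> 'b::topological_space \<Rightarrow> real"
  assumes "pair_prob_space M N"
    "sets M = sets (restrict_space borel X)" "sets N = sets (restrict_space borel Y)"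
    "compact X" "compact Y" "continuous_on (X \<times> Y) f"
  shows "integrable (M \<Otimes>\<^sub>M N) f"
proof -
  interpret pair_prob_space M N by fact
  obtain B where "\<And>z. z \<in> X \<times> Y \<Longrightarrow> \<bar>f z\<bar> \<le> B"
    using compact_continuous_on_abs_bound[OF compact_Times assms(6)] assms(4,5) by metis
  then show ?thesis
    using borel_measurable_pair_continuous_on[OF assms(2-6)]
    by (intro integrable_const_bound[where B=B] AE_I2)
      (auto simp: space_pair_measure space_eq_of_sets_restrict_borel[OF assms(2)]
        space_eq_of_sets_restrict_borel[OF assms(3)])
qed

section \<open>Elementary estimates for exp and ln\<close>

lemma abs_exp_minus_one_minus_le:
  fixes s :: real
  assumes "\<bar>s\<bar> \<le> 1/2"
  shows "\<bar>exp s - 1 - s\<bar> \<le> 2 * s^2"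
proof -
  have lower: "1 + s \<le> exp s" by (rule exp_ge_add_one_self)
  have "(exp s - 1 - s) * (1/2) \<le> (exp s - 1 - s) * (1 - s)"
  proof (rule mult_left_mono)
    show "1/2 \<le> 1 - s" using assms by (simp add: abs_le_iff)
    show "0 \<le> exp s - 1 - s" using lower by linarith
  qed
  then have "exp s - 1 - s \<le> 2 * ((exp s - 1 - s) * (1 - s))" by simp
  moreover have "(exp s - 1 - s) * (1 - s) = exp s * (1 - s) - (1 - s^2)"
    by (simp add: algebra_simps power2_eq_square)
  moreover have "exp s * (1 - s) \<le> exp s * exp (- s)"
    using exp_ge_add_one_self[of "- s"] by (intro mult_left_mono) auto
  ultimately have "exp s - 1 - s \<le> 2 * s^2" by (simp add: exp_minus_inverse)
  then show ?thesis using lower zero_le_power2[of s] by (intro abs_leI) linarith+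
qed

lemma abs_exp_minus_one_le:
  fixes s :: real
  assumes "\<bar>s\<bar> \<le> 1/2"
  shows "\<bar>exp s - 1\<bar> \<le> 2 * \<bar>s\<bar>"
proof -
  have "2 * s^2 \<le> \<bar>s\<bar>"
    using mult_right_mono[of "2 * \<bar>s\<bar>" 1 "\<bar>s\<bar>"] assms by (simp add: power2_eq_square)
  then show ?thesis using abs_exp_minus_one_minus_le[OF assms] by linarith
qed

lemma abs_mult_exp_minus_le:
  fixes a s :: real
  assumes "0 \<le> a" "a \<le> Up" "\<bar>s\<bar> \<le> 1/2"
  shows "\<bar>a * exp s - a - s * a\<bar> \<le> 2 * Up * s^2" "\<bar>a * exp s - a\<bar> \<le> 2 * Up * \<bar>s\<bar>"
proof -
  have "\<bar>a * exp s - a - s * a\<bar> = \<bar>a * (exp s - 1 - s)\<bar>" by (simp add: algebra_simps)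
  also have "\<dots> = a * \<bar>exp s - 1 - s\<bar>" using assms(1) by (simp add: abs_mult)
  also have "\<dots> \<le> Up * (2 * s^2)"
    using assms abs_exp_minus_one_minus_le[OF assms(3)] by (intro mult_mono) auto
  finally show "\<bar>a * exp s - a - s * a\<bar> \<le> 2 * Up * s^2" by simp
  have "\<bar>a * exp s - a\<bar> = \<bar>a * (exp s - 1)\<bar>" by (simp add: algebra_simps)
  also have "\<dots> = a * \<bar>exp s - 1\<bar>" using assms(1) by (simp add: abs_mult)
  also have "\<dots> \<le> Up * (2 * \<bar>s\<bar>)"
    using assms abs_exp_minus_one_le[OF assms(3)] by (intro mult_mono) auto
  finally show "\<bar>a * exp s - a\<bar> \<le> 2 * Up * \<bar>s\<bar>" by simp
qed

lemma abs_ln_diff_minus_le: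
  fixes a b :: real
  assumes "a > 0" "b > 0"
  shows "\<bar>ln a - ln b - (a - b) / b\<bar> \<le> (a - b)^2 / (a * b)"
proof -
  have "ln a - ln b \<le> (a - b) / b"
    using ln_le_minus_one[of "a / b"] assms by (simp add: ln_div diff_divide_distrib)
  moreover have "(a - b) / a \<le> ln a - ln b"
    using ln_le_minus_one[of "b / a"] assms by (simp add: ln_div diff_divide_distrib)
  moreover have "(a - b) / b - (a - b) / a = (a - b)^2 / (a * b)"
    using assms by (simp add: field_simps power2_eq_square)
  ultimately show ?thesis by linarith
qed

lemma abs_ln_diff_linear_le:
  fixes a b d t L A C :: real
  assumes "L > 0" "b \<ge> L" "a \<ge> L / 2"
    and quadratic: "\<bar>a - b - t * d\<bar> \<le> C * t^2" and linear: "\<bar>a - b\<bar> \<le> A * \<bar>t\<bar>"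
  shows "\<bar>ln a - ln b - t * (d / b)\<bar> \<le> (2 * A^2 / L^2 + C / L) * t^2"
proof -
  have "a > 0" "b > 0" using assms(1-3) by auto
  have "(a - b)^2 \<le> (A * \<bar>t\<bar>)^2"
    using power_mono[OF linear, of 2] by simp
  moreover have "L * L / 2 \<le> a * b"
    using mult_mono[OF assms(3,2)] assms(1) \<open>a > 0\<close> by simp
  ultimately have "(a - b)^2 / (a * b) \<le> (A * \<bar>t\<bar>)^2 / (L * L / 2)"
    using assms(1) by (intro frac_le) auto
  also have "\<dots> = 2 * A^2 / L^2 * t^2" by (simp add: power2_eq_square field_simps)
  finally have ln_part: "\<bar>ln a - ln b - (a - b) / b\<bar> \<le> 2 * A^2 / L^2 * t^2"
    using abs_ln_diff_minus_le[OF \<open>a > 0\<close> \<open>b > 0\<close>] by linarith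
  have "\<bar>(a - b - t * d) / b\<bar> \<le> C * t^2 / b"
    using quadratic \<open>b > 0\<close> by (simp add: divide_right_mono)
  also have "\<dots> \<le> C * t^2 / L"
    using quadratic assms(1,2) by (intro divide_left_mono) auto
  finally have linear_part: "\<bar>(a - b - t * d) / b\<bar> \<le> C / L * t^2" by simp
  have "ln a - ln b - t * (d / b) = (ln a - ln b - (a - b) / b) + (a - b - t * d) / b"
    using \<open>b > 0\<close> by (simp add: field_simps)
  then have "\<bar>ln a - ln b - t * (d / b)\<bar> \<le> \<bar>ln a - ln b - (a - b) / b\<bar> + \<bar>(a - b - t * d) / b\<bar>"
    by (simp only: abs_triangle_ineq)
  also have "\<dots> \<le> 2 * A^2 / L^2 * t^2 + C / L * t^2" using ln_part linear_part by (rule add_mono)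
  finally show ?thesis by (simp only: distrib_right)
qed

section \<open>Differentiation under the integral sign\<close>

lemma has_real_derivative_at_0_of_quadratic_bound:
  fixes F :: "real \<Rightarrow> real"
  assumes "\<delta> > 0" and bound: "\<And>t. \<bar>t\<bar> < \<delta> \<Longrightarrow> \<bar>F t - F 0 - t * D\<bar> \<le> K * t^2"
  shows "(F has_real_derivative D) (at 0)"
proof -
  have "\<forall>\<^sub>F t in at 0. norm ((F t - F 0) / t - D) \<le> K * \<bar>t\<bar>"
    unfolding eventually_at
  proof (intro exI[of _ \<delta>] conjI ballI impI \<open>\<delta> > 0\<close>)
    fix t :: real assume "t \<in> UNIV" and t: "t \<noteq> 0 \<and> dist t 0 < \<delta>"
    have "norm ((F t - F 0) / t - D) = \<bar>F t - F 0 - t * D\<bar> / \<bar>t\<bar>"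
      using t by (simp add: field_simps)
    also have "\<dots> \<le> K * t^2 / \<bar>t\<bar>"
      using bound t by (intro divide_right_mono) auto
    also have "\<dots> = K * \<bar>t\<bar>" using t by (cases "t \<ge> 0") (simp_all add: power2_eq_square)
    finally show "norm ((F t - F 0) / t - D) \<le> K * \<bar>t\<bar>" .
  qed
  moreover have "((\<lambda>t::real. K * \<bar>t\<bar>) \<longlongrightarrow> 0) (at 0)"
    using tendsto_mult_right_zero[OF tendsto_rabs_zero[OF tendsto_ident_at]] by simp
  ultimately have "((\<lambda>t. (F t - F 0) / t - D) \<longlongrightarrow> 0) (at 0)"
    by (rule Lim_null_comparison)
  then show ?thesis
    by (simp add: has_field_derivative_iff Lim_null[symmetric])
qed

lemma (in prob_space) has_real_derivative_integral:
  fixes f :: "real \<Rightarrow> 'a \<Rightarrow> real"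
  assumes "\<And>t. integrable M (f t)" "integrable M g" "\<delta> > 0"
    and bound: "\<And>t x. \<bar>t\<bar> < \<delta> \<Longrightarrow> x \<in> space M \<Longrightarrow> \<bar>f t x - f 0 x - t * g x\<bar> \<le> K * t^2"
  shows "((\<lambda>t. \<integral>x. f t x \<partial>M) has_real_derivative (\<integral>x. g x \<partial>M)) (at 0)"
proof (rule has_real_derivative_at_0_of_quadratic_bound[OF \<open>\<delta> > 0\<close>])
  fix t :: real assume "\<bar>t\<bar> < \<delta>"
  have "(\<integral>x. f t x \<partial>M) - (\<integral>x. f 0 x \<partial>M) - t * (\<integral>x. g x \<partial>M) = (\<integral>x. f t x - f 0 x - t * g x \<partial>M)"
    using assms(1,2) by simp
  also have "\<bar>\<dots>\<bar> \<le> K * t^2"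
    using assms(1,2) bound \<open>\<bar>t\<bar> < \<delta>\<close> by (intro abs_integral_le_const AE_I2) auto
  finally show "\<bar>(\<integral>x. f t x \<partial>M) - (\<integral>x. f 0 x \<partial>M) - t * (\<integral>x. g x \<partial>M)\<bar> \<le> K * t^2" .
qed

lemma (in prob_space) ln_integral_exp_expansion:
  fixes f g :: "'a \<Rightarrow> real"
  assumes meas: "f \<in> borel_measurable M" "g \<in> borel_measurable M"
    and "0 < Lo" and f: "\<And>x. x \<in> space M \<Longrightarrow> Lo \<le> f x \<and> f x \<le> Up"
    and g: "\<And>x. x \<in> space M \<Longrightarrow> \<bar>g x\<bar> \<le> B" and t: "\<bar>t\<bar> * B \<le> 1/2"
  shows "\<bar>ln (\<integral>x. f x * exp (- (t * g x)) \<partial>M) - ln (\<integral>x. f x \<partial>M)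
      - t * (- (\<integral>x. g x * f x \<partial>M) / (\<integral>x. f x \<partial>M))\<bar>
    \<le> (2 * (2 * Up * B)^2 / Lo^2 + 2 * Up * B^2 / Lo) * t^2"
proof (rule abs_ln_diff_linear_le[OF \<open>0 < Lo\<close>])
  have f_nonneg: "0 \<le> f x" "0 \<le> Up" if "x \<in> space M" for x
    using f[OF that] \<open>0 < Lo\<close> by auto
  have s: "\<bar>t * g x\<bar> \<le> B * \<bar>t\<bar>" "\<bar>t * g x\<bar> \<le> 1/2" "(t * g x)^2 \<le> B^2 * t^2"
    if "x \<in> space M" for x
  proof -
    show "\<bar>t * g x\<bar> \<le> B * \<bar>t\<bar>"
      using mult_left_mono[OF g[OF that], of "\<bar>t\<bar>"] by (simp add: abs_mult mult.commute)
    then show "\<bar>t * g x\<bar> \<le> 1/2" using t by (simp add: mult.commute)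
    show "(t * g x)^2 \<le> B^2 * t^2"
      using power_mono[OF \<open>\<bar>t * g x\<bar> \<le> B * \<bar>t\<bar>\<close>, of 2] by (simp add: power_mult_distrib)
  qed
  have bounded_integrable: "integrable M h"
    if "h \<in> borel_measurable M" "\<And>x. x \<in> space M \<Longrightarrow> \<bar>h x\<bar> \<le> C" for h :: "'a \<Rightarrow> real" and C
    using that by (intro integrable_const_bound[where B=C] AE_I2) auto
  have bounds: "\<bar>f x * exp (- (t * g x))\<bar> \<le> Up * exp (1/2)" "\<bar>f x\<bar> \<le> Up" "\<bar>g x * f x\<bar> \<le> B * Up"
    if "x \<in> space M" for x
  proof -
    have "exp (- (t * g x)) \<le> exp (1/2)"
      using s(2)[OF that] by (simp add: abs_le_iff)
    then have "f x * exp (- (t * g x)) \<le> Up * exp (1/2)"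
      using f[OF that] f_nonneg[OF that] by (intro mult_mono) auto
    then show "\<bar>f x * exp (- (t * g x))\<bar> \<le> Up * exp (1/2)"
      using f_nonneg[OF that] by simp
    show "\<bar>f x\<bar> \<le> Up" using f[OF that] f_nonneg[OF that] by simp
    have "\<bar>g x\<bar> * f x \<le> B * Up"
      using f[OF that] g[OF that] f_nonneg[OF that] by (intro mult_mono) auto
    then show "\<bar>g x * f x\<bar> \<le> B * Up"
      using f_nonneg[OF that] by (simp add: abs_mult)
  qed
  have "(\<lambda>x. f x * exp (- (t * g x))) \<in> borel_measurable M" "(\<lambda>x. g x * f x) \<in> borel_measurable M"
    using meas by measurable
  then have int: "integrable M f" "integrable M (\<lambda>x. f x * exp (- (t * g x)))"
    "integrable M (\<lambda>x. g x * f x)"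
    using meas(1) by (auto intro: bounded_integrable bounds)
  show "Lo \<le> (\<integral>x. f x \<partial>M)" using int f by (intro integral_ge_const AE_I2) auto
  show "Lo / 2 \<le> (\<integral>x. f x * exp (- (t * g x)) \<partial>M)"
  proof (intro integral_ge_const AE_I2 int)
    fix x assume x: "x \<in> space M"
    have "1/2 \<le> exp (- (t * g x))"
      using exp_ge_add_one_self[of "- (t * g x)"] s(2)[OF x] by (simp add: abs_le_iff)
    then show "Lo / 2 \<le> f x * exp (- (t * g x))"
      using mult_mono[of Lo "f x" "1/2" "exp (- (t * g x))"] f[OF x] \<open>0 < Lo\<close> by simp
  qed
  have "\<bar>f x * exp (- (t * g x)) - f x - t * - (g x * f x)\<bar> \<le> 2 * Up * B^2 * t^2"
    if x: "x \<in> space M" for x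
    using abs_mult_exp_minus_le(1)[of "f x" Up "- (t * g x)"] f[OF x] f_nonneg[OF x] s[OF x]
      mult_left_mono[OF s(3)[OF x], of "2 * Up"]
    by (simp add: algebra_simps)
  then have "\<bar>\<integral>x. f x * exp (- (t * g x)) - f x - t * - (g x * f x) \<partial>M\<bar> \<le> 2 * Up * B^2 * t^2"
    using int by (intro abs_integral_le_const AE_I2) auto
  then show "\<bar>(\<integral>x. f x * exp (- (t * g x)) \<partial>M) - (\<integral>x. f x \<partial>M) - t * - (\<integral>x. g x * f x \<partial>M)\<bar>
      \<le> 2 * Up * B^2 * t^2"
    using int by simp
  have "\<bar>f x * exp (- (t * g x)) - f x\<bar> \<le> 2 * Up * B * \<bar>t\<bar>" if x: "x \<in> space M" for x
    using abs_mult_exp_minus_le(2)[of "f x" Up "- (t * g x)"] f[OF x] f_nonneg[OF x] s[OF x]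
      mult_left_mono[OF s(1)[OF x], of "2 * Up"]
    by (simp add: algebra_simps)
  then have "\<bar>\<integral>x. f x * exp (- (t * g x)) - f x \<partial>M\<bar> \<le> 2 * Up * B * \<bar>t\<bar>"
    using int by (intro abs_integral_le_const AE_I2) auto
  then show "\<bar>(\<integral>x. f x * exp (- (t * g x)) \<partial>M) - (\<integral>x. f x \<partial>M)\<bar> \<le> 2 * Up * B * \<bar>t\<bar>"
    using int by simp
qed

section \<open>The dual functionals on compact spaces\<close>

locale compact_entropic_duality = pair_prob_space \<mu> \<nu>
  for \<mu> :: "'a::topological_space measure" and \<nu> :: "'b::topological_space measure" +
  fixes X :: "'a set" and Y :: "'b set" and c :: "'a \<times> 'b \<Rightarrow> real"
  assumes compact_X: "compact X" and compact_Y: "compact Y"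
    and sets_\<mu>: "sets \<mu> = sets (restrict_space borel X)"
    and sets_\<nu>: "sets \<nu> = sets (restrict_space borel Y)"
    and continuous_c: "continuous_on (X \<times> Y) c"
begin

lemma space_\<mu>: "space \<mu> = X"
  by (rule space_eq_of_sets_restrict_borel[OF sets_\<mu>])

lemma space_\<nu>: "space \<nu> = Y"
  by (rule space_eq_of_sets_restrict_borel[OF sets_\<nu>])

lemma integrable_\<mu>: "continuous_on X h \<Longrightarrow> integrable \<mu> (h :: 'a \<Rightarrow> real)"
  by (rule integrable_continuous_on_compact[OF M1.finite_measure_axioms sets_\<mu> compact_X])

lemma integrable_\<nu>: "continuous_on Y h \<Longrightarrow> integrable \<nu> (h :: 'b \<Rightarrow> real)"
  by (rule integrable_continuous_on_compact[OF M2.finite_measure_axioms sets_\<nu> compact_Y])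

lemma exp_vdual:
  assumes "continuous_on X w" "y \<in> Y"
  shows "exp (vdual \<mu> c w y) = (\<integral>x. exp (- c (x, y) - w x) \<partial>\<mu>)"
proof -
  have "continuous_on X (\<lambda>x. - c (x, y) - w x)"
    using assms by (intro continuous_intros continuous_on_compose2[OF continuous_c]) auto
  then show ?thesis
    using integral_exp_continuous_on_pos[OF M1.prob_space_axioms sets_\<mu> compact_X]
    by (simp add: vdual_def)
qed

lemma continuous_on_vdual:
  assumes "continuous_on X w"
  shows "continuous_on Y (vdual \<mu> c w)"
proof -
  have "continuous_on (Y \<times> X) (\<lambda>p. exp (- c (snd p, fst p) - w (snd p)))"
    using assms by (intro continuous_intros continuous_on_compose2[OF continuous_c]
        continuous_on_compose2[OF assms]) auto
  from continuous_on_parametric_integral[OF M1.prob_space_axioms sets_\<mu> compact_X this]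
  have "continuous_on Y (\<lambda>y. exp (vdual \<mu> c w y))"
    using exp_vdual[OF assms] by (simp cong: continuous_on_cong)
  then have "continuous_on Y (\<lambda>y. ln (exp (vdual \<mu> c w y)))"
    by (intro continuous_on_ln) auto
  then show ?thesis by simp
qed

lemma exp_udual:
  assumes "continuous_on Y v" "x \<in> X"
  shows "exp (udual \<nu> c v x) = (\<integral>y. exp (- c (x, y) - v y) \<partial>\<nu>)"
proof -
  have "continuous_on Y (\<lambda>y. - c (x, y) - v y)"
    using assms by (intro continuous_intros continuous_on_compose2[OF continuous_c]) auto
  then show ?thesis
    using integral_exp_continuous_on_pos[OF M2.prob_space_axioms sets_\<nu> compact_Y]
    by (simp add: udual_def)
qed

lemma continuous_on_udual:
  assumes "continuous_on Y v"
  shows "continuous_on X (udual \<nu> c v)"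
proof -
  have "continuous_on (X \<times> Y) (\<lambda>p. exp (- c p - v (snd p)))"
    using assms by (intro continuous_intros continuous_c continuous_on_compose2[OF assms]) auto
  from continuous_on_parametric_integral[OF M2.prob_space_axioms sets_\<nu> compact_Y this]
  have "continuous_on X (\<lambda>x. exp (udual \<nu> c v x))"
    using exp_udual[OF assms] by (simp cong: continuous_on_cong)
  then have "continuous_on X (\<lambda>x. ln (exp (udual \<nu> c v x)))"
    by (intro continuous_on_ln) auto
  then show ?thesis by simp
qed

lemma continuous_on_Sop: "continuous_on X u \<Longrightarrow> continuous_on X (Sop \<mu> \<nu> c u)"
  unfolding Sop_def by (intro continuous_on_udual continuous_on_vdual)

definition plan_density :: "('a \<Rightarrow> real) \<Rightarrow> 'a \<Rightarrow> 'b \<Rightarrow> real" where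
  "plan_density u x y = exp (- c (x, y) - u x - vdual \<mu> c u y)"

lemma continuous_on_plan_density:
  assumes "continuous_on X u"
  shows "continuous_on (X \<times> Y) (\<lambda>p. plan_density u (fst p) (snd p))"
  unfolding plan_density_def
  using assms continuous_on_vdual[OF assms] continuous_c
  by (intro continuous_intros continuous_on_compose2[OF assms]
      continuous_on_compose2[OF continuous_on_vdual[OF assms]]) auto

lemma rho_eq_integral_plan_density:
  assumes "continuous_on X u" "x \<in> X"
  shows "rho \<mu> \<nu> c u x = (\<integral>y. plan_density u x y \<partial>\<nu>)"
proof -
  have "rho \<mu> \<nu> c u x = exp (udual \<nu> c (vdual \<mu> c u) x) * exp (- u x)"
    by (simp add: rho_def Sop_def exp_diff exp_minus field_simps)
  also have "\<dots> = (\<integral>y. exp (- c (x, y) - vdual \<mu> c u y) * exp (- u x) \<partial>\<nu>)"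
    using exp_udual[OF continuous_on_vdual[OF assms(1)] assms(2)] by simp
  also have "\<dots> = (\<integral>y. plan_density u x y \<partial>\<nu>)"
    by (simp add: plan_density_def mult_exp_exp diff_diff_eq add.commute)
  finally show ?thesis .
qed

lemma continuous_on_rho: "continuous_on X u \<Longrightarrow> continuous_on X (rho \<mu> \<nu> c u)"
  unfolding rho_def[abs_def] by (intro continuous_intros continuous_on_Sop)

lemma vdual_expansion:
  assumes u: "continuous_on X u" and ud: "continuous_on X ud"
  obtains \<delta> K where "\<delta> > 0" "\<And>t y. \<bar>t\<bar> < \<delta> \<Longrightarrow> y \<in> Y \<Longrightarrow>
    \<bar>vdual \<mu> c (\<lambda>x. u x + t * ud x) y - vdual \<mu> c u y
      - t * - (\<integral>x. ud x * plan_density u x y \<partial>\<mu>)\<bar> \<le> K * t^2"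
proof -
  obtain Bc where Bc: "\<And>z. z \<in> X \<times> Y \<Longrightarrow> \<bar>c z\<bar> \<le> Bc"
    using compact_continuous_on_abs_bound[OF compact_Times[OF compact_X compact_Y] continuous_c]
    by blast
  obtain Bu where Bu: "\<And>x. x \<in> X \<Longrightarrow> \<bar>u x\<bar> \<le> Bu"
    using compact_continuous_on_abs_bound[OF compact_X u] by blast
  obtain B where "B > 0" and B: "\<And>x. x \<in> X \<Longrightarrow> \<bar>ud x\<bar> \<le> B"
    using compact_continuous_on_abs_bound[OF compact_X ud] by blast
  define Lo where "Lo = exp (- (Bc + Bu))"
  define Up where "Up = exp (Bc + Bu)"
  define K where "K = 2 * (2 * Up * B)^2 / Lo^2 + 2 * Up * B^2 / Lo"
  have "\<bar>vdual \<mu> c (\<lambda>x. u x + t * ud x) y - vdual \<mu> c u y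
      - t * - (\<integral>x. ud x * plan_density u x y \<partial>\<mu>)\<bar> \<le> K * t^2"
    if t: "\<bar>t\<bar> < 1 / (2 * B)" and y: "y \<in> Y" for t y
  proof -
    define E where "E x = exp (- c (x, y) - u x)" for x
    have E_meas: "E \<in> borel_measurable \<mu>"
      unfolding E_def using y u
      by (intro borel_measurable_continuous_on_sets_restrict[OF sets_\<mu>] continuous_intros
          continuous_on_compose2[OF continuous_c]) auto
    have E_bounds: "Lo \<le> E x \<and> E x \<le> Up" if "x \<in> space \<mu>" for x
    proof -
      have "\<bar>- c (x, y) - u x\<bar> \<le> Bc + Bu"
        using Bc[of "(x, y)"] Bu[of x] that y by (auto simp: space_\<mu>)
      then show ?thesis by (simp add: E_def Lo_def Up_def abs_le_iff)
    qed
    have "\<bar>t\<bar> * B \<le> 1/2"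
      using t \<open>B > 0\<close> by (simp add: field_simps)
    from M1.ln_integral_exp_expansion[OF E_meas _ _ E_bounds _ this]
    have expansion: "\<bar>ln (\<integral>x. E x * exp (- (t * ud x)) \<partial>\<mu>) - ln (\<integral>x. E x \<partial>\<mu>)
        - t * (- (\<integral>x. ud x * E x \<partial>\<mu>) / (\<integral>x. E x \<partial>\<mu>))\<bar> \<le> K * t^2"
      using B ud \<open>B > 0\<close>
      by (simp add: K_def Lo_def space_\<mu> borel_measurable_continuous_on_sets_restrict[OF sets_\<mu>])
    have "exp (- c (x, y) - (u x + t * ud x)) = E x * exp (- (t * ud x))" for x
      unfolding E_def mult_exp_exp by (simp add: algebra_simps)
    then have "vdual \<mu> c (\<lambda>x. u x + t * ud x) y = ln (\<integral>x. E x * exp (- (t * ud x)) \<partial>\<mu>)"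
      by (simp add: vdual_def)
    moreover have "vdual \<mu> c u y = ln (\<integral>x. E x \<partial>\<mu>)"
      by (simp add: vdual_def E_def)
    moreover have "(\<integral>x. ud x * plan_density u x y \<partial>\<mu>) = (\<integral>x. ud x * E x \<partial>\<mu>) / (\<integral>x. E x \<partial>\<mu>)"
      using exp_vdual[OF u y]
      by (simp add: plan_density_def E_def exp_diff integral_divide_zero[symmetric])
    ultimately show ?thesis using expansion by simp
  qed
  moreover have "1 / (2 * B) > 0" using \<open>B > 0\<close> by simp
  ultimately show ?thesis using that by blast
qed

lemma has_real_derivative_integral_vdual:
  assumes u: "continuous_on X u" and ud: "continuous_on X ud"
  shows "((\<lambda>t. \<integral>y. vdual \<mu> c (\<lambda>x. u x + t * ud x) y \<partial>\<nu>) has_real_derivative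
      (\<integral>y. - (\<integral>x. ud x * plan_density u x y \<partial>\<mu>) \<partial>\<nu>)) (at 0)"
proof -
  obtain \<delta> K where "\<delta> > 0" and expansion: "\<And>t y. \<bar>t\<bar> < \<delta> \<Longrightarrow> y \<in> Y \<Longrightarrow>
    \<bar>vdual \<mu> c (\<lambda>x. u x + t * ud x) y - vdual \<mu> c u y
      - t * - (\<integral>x. ud x * plan_density u x y \<partial>\<mu>)\<bar> \<le> K * t^2"
    using vdual_expansion[OF u ud] by blast
  have "continuous_on (Y \<times> X) (\<lambda>p. ud (snd p) * plan_density u (snd p) (fst p))"
    using ud continuous_on_plan_density[OF u]
    by (intro continuous_intros continuous_on_compose2[OF ud]
        continuous_on_compose2[OF continuous_on_plan_density[OF u], of _ "\<lambda>p. (snd p, fst p)",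
          simplified]) auto
  from continuous_on_parametric_integral[OF M1.prob_space_axioms sets_\<mu> compact_X this]
  have "integrable \<nu> (\<lambda>y. - (\<integral>x. ud x * plan_density u x y \<partial>\<mu>))"
    by (intro integrable_\<nu> continuous_intros) simp
  moreover have "integrable \<nu> (\<lambda>y. vdual \<mu> c (\<lambda>x. u x + t * ud x) y)" for t
    using u ud by (intro integrable_\<nu> continuous_on_vdual continuous_intros)
  ultimately show ?thesis
    using expansion \<open>\<delta> > 0\<close> by (intro M2.has_real_derivative_integral[where K=K]) (auto simp: space_\<nu>)
qed

lemma integral_plan_density_swap:
  assumes u: "continuous_on X u" and ud: "continuous_on X ud"
  shows "(\<integral>y. (\<integral>x. ud x * plan_density u x y \<partial>\<mu>) \<partial>\<nu>) = (\<integral>x. ud x * rho \<mu> \<nu> c u x \<partial>\<mu>)"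
proof -
  have "continuous_on (X \<times> Y) (\<lambda>p. ud (fst p) * plan_density u (fst p) (snd p))"
    using continuous_on_plan_density[OF u]
    by (intro continuous_intros continuous_on_compose2[OF ud]) auto
  then have "integrable (\<mu> \<Otimes>\<^sub>M \<nu>) (\<lambda>(x, y). ud x * plan_density u x y)"
    using integrable_pair_continuous_on[OF pair_prob_space_axioms sets_\<mu> sets_\<nu> compact_X compact_Y]
    by (simp add: split_beta')
  then have "(\<integral>y. (\<integral>x. ud x * plan_density u x y \<partial>\<mu>) \<partial>\<nu>)
      = (\<integral>x. (\<integral>y. ud x * plan_density u x y \<partial>\<nu>) \<partial>\<mu>)"
    by (rule Fubini_integral)
  also have "\<dots> = (\<integral>x. ud x * rho \<mu> \<nu> c u x \<partial>\<mu>)"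
    using rho_eq_integral_plan_density[OF u] by (intro Bochner_Integration.integral_cong) (simp_all add: space_\<mu>)
  finally show ?thesis .
qed

lemma has_real_derivative_Ffun:
  assumes u: "continuous_on X u" and ud: "continuous_on X ud"
  shows "((\<lambda>t. Ffun \<mu> \<nu> c (\<lambda>x. u x + t * ud x)) has_real_derivative
      (\<integral>x. ud x * (1 - rho \<mu> \<nu> c u x) \<partial>\<mu>)) (at 0)"
proof -
  have "Ffun \<mu> \<nu> c (\<lambda>x. u x + t * ud x)
      = (\<integral>x. u x \<partial>\<mu>) + t * (\<integral>x. ud x \<partial>\<mu>) + (\<integral>y. vdual \<mu> c (\<lambda>x. u x + t * ud x) y \<partial>\<nu>)" for t
    using integrable_\<mu>[OF u] integrable_\<mu>[OF ud] by (simp add: Ffun_def)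
  moreover have "((\<lambda>t. (\<integral>x. u x \<partial>\<mu>) + t * (\<integral>x. ud x \<partial>\<mu>) + (\<integral>y. vdual \<mu> c (\<lambda>x. u x + t * ud x) y \<partial>\<nu>))
      has_real_derivative (\<integral>x. ud x \<partial>\<mu>) + (\<integral>y. - (\<integral>x. ud x * plan_density u x y \<partial>\<mu>) \<partial>\<nu>)) (at 0)"
    by (auto intro!: derivative_eq_intros has_real_derivative_integral_vdual[OF u ud])
  moreover have "integrable \<mu> (\<lambda>x. ud x * rho \<mu> \<nu> c u x)"
    using ud continuous_on_rho[OF u] by (intro integrable_\<mu> continuous_intros)
  then have "(\<integral>x. ud x \<partial>\<mu>) + (\<integral>y. - (\<integral>x. ud x * plan_density u x y \<partial>\<mu>) \<partial>\<nu>)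
      = (\<integral>x. ud x * (1 - rho \<mu> \<nu> c u x) \<partial>\<mu>)"
    using integral_plan_density_swap[OF u ud] integrable_\<mu>[OF ud] by (simp add: algebra_simps)
  ultimately show ?thesis by simp
qed

lemma critical_point_iff_AE_rho_eq_1:
  assumes u: "continuous_on X u"
  shows "critical_point X \<mu> \<nu> c u \<longleftrightarrow> (AE x in \<mu>. rho \<mu> \<nu> c u x = 1)"
proof
  assume "critical_point X \<mu> \<nu> c u"
  moreover have ud: "continuous_on X (\<lambda>x. 1 - rho \<mu> \<nu> c u x)"
    by (intro continuous_intros continuous_on_rho[OF u])
  ultimately have "(\<integral>x. (1 - rho \<mu> \<nu> c u x) * (1 - rho \<mu> \<nu> c u x) \<partial>\<mu>) = 0"
    using DERIV_unique[OF has_real_derivative_Ffun[OF u ud]] by (auto simp: critical_point_def)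
  moreover have "integrable \<mu> (\<lambda>x. (1 - rho \<mu> \<nu> c u x) * (1 - rho \<mu> \<nu> c u x))"
    using continuous_on_rho[OF u] by (intro integrable_\<mu> continuous_intros)
  ultimately have "AE x in \<mu>. (1 - rho \<mu> \<nu> c u x) * (1 - rho \<mu> \<nu> c u x) = 0"
    by (subst (asm) integral_nonneg_eq_0_iff_AE) auto
  then show "AE x in \<mu>. rho \<mu> \<nu> c u x = 1" by eventually_elim simp
next
  assume "AE x in \<mu>. rho \<mu> \<nu> c u x = 1"
  then have "(\<integral>x. ud x * (1 - rho \<mu> \<nu> c u x) \<partial>\<mu>) = 0" for ud
    by (intro integral_eq_zero_AE) auto
  then show "critical_point X \<mu> \<nu> c u"
    using has_real_derivative_Ffun[OF u] by (simp add: critical_point_def)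
qed

lemma vdual_cong_AE:
  assumes "continuous_on X w" "continuous_on X w'" "AE x in \<mu>. w x = w' x" "y \<in> Y"
  shows "vdual \<mu> c w y = vdual \<mu> c w' y"
proof -
  have "continuous_on X (\<lambda>x. exp (- c (x, y) - f x))" if "continuous_on X f" for f
    using that assms(4) by (intro continuous_intros continuous_on_compose2[OF continuous_c]) auto
  then show ?thesis
    unfolding vdual_def using assms(1-3)
    by (intro arg_cong[where f=ln] integral_cong_AE
        borel_measurable_continuous_on_sets_restrict[OF sets_\<mu>]) auto
qed

lemma Sop_Sop_eq_if_AE_rho_eq_1:
  assumes u: "continuous_on X u" and "AE x in \<mu>. rho \<mu> \<nu> c u x = 1"
  shows "Sop \<mu> \<nu> c (Sop \<mu> \<nu> c u) x = Sop \<mu> \<nu> c u x"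
proof -
  have "AE x in \<mu>. Sop \<mu> \<nu> c u x = u x"
    using assms(2) by eventually_elim (simp add: rho_def)
  then have "vdual \<mu> c (Sop \<mu> \<nu> c u) y = vdual \<mu> c u y" if "y \<in> Y" for y
    using vdual_cong_AE[OF continuous_on_Sop[OF u] u _ that] by simp
  then show ?thesis
    unfolding Sop_def[of _ _ _ "Sop \<mu> \<nu> c u"] udual_def
    by (simp add: Sop_def udual_def space_\<nu>[symmetric] cong: Bochner_Integration.integral_cong)
qed

end

theorem lemma2p5:
  fixes X :: "'a::topological_space set" and Y :: "'b::topological_space set"
    and \<mu> :: "'a measure" and \<nu> :: "'b measure"
    and c :: "'a \<times> 'b \<Rightarrow> real" and u :: "'a \<Rightarrow> real"
  assumes "compact X" and "compact Y"
    and "prob_space \<mu>" and "sets \<mu> = sets (restrict_space borel X)"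
    and "prob_space \<nu>" and "sets \<nu> = sets (restrict_space borel Y)"
    and "continuous_on (X \<times> Y) c"
    and "continuous_on X u"
  shows "(critical_point X \<mu> \<nu> c u \<longleftrightarrow> (AE x in \<mu>. rho \<mu> \<nu> c u x = 1))
    \<and> (critical_point X \<mu> \<nu> c u \<longrightarrow>
         continuous_on X (Sop \<mu> \<nu> c u) \<and>
         (\<forall>x\<in>X. Sop \<mu> \<nu> c (Sop \<mu> \<nu> c u) x = Sop \<mu> \<nu> c u x))"
proof -
  interpret pair_prob_space \<mu> \<nu>
    using assms(3,5) by (simp add: pair_prob_space_def pair_sigma_finite_def prob_space_imp_sigma_finite)
  interpret compact_entropic_duality \<mu> \<nu> X Y c
    using assms by unfold_locales
  show ?thesis
    using critical_point_iff_AE_rho_eq_1[OF assms(8)] continuous_on_Sop[OF assms(8)]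
      Sop_Sop_eq_if_AE_rho_eq_1[OF assms(8)] by blast
qed

end
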